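(* Consider any sequences generated by Algorithm 3 with parameters satisfying $0<\alpha\le\mu/2$ and $\eta\le\frac1{4\tau L}$, and let $\delta:=\min\{1,\frac1{2\eta L}\}$. Then for every $k\ge0$, \[ \frac1\eta\|x^{k+1}-x^*\|^2 \le \frac1\eta\|x^k-x^*\|^2 - \frac{3\alpha}4\|x^{k+1}-x^*\|^2 + \frac{2(1-\tau)}\tau\mathrm{D}_r(x_f^k,x^* ) - \frac{2-\tau}\tau\mathrm{D}_r(x_f^{k+1},x^* ) - \frac{\eta\delta}4\|y^{k+1}-y^*\|^2 + 2\langle y^{k+1}-y^*,x^{k+1}-x^*\rangle. \]
   Context: $F:\mathbb{R}^{nd}\to\mathbb{R}$ is differentiable, $\mu$-strongly convex and $L$-smooth, $0<\mu\le L$. $\mathbf{W}$ is a symmetric positive semidefinite $nd\times nd$ matrix whose kernel is the consensus space $\{(x_1,\dots,x_n)\in(\mathbb{R}^d)^n:x_1=\dots=x_n\}$. $x^*$ is the unique minimizer of $F$ over $\ker(\mathbf{W})$; $y^*:=\nabla F(x^* )-\frac\mu2x^*$, $z^*:=-\nabla F(x^* )$. $r(x):=F(x)-\frac\mu4\|x\|^2$, $h(y,z):=\frac1\mu\|y+z\|^2+\frac\nu2\|y\|^2$. $\mathrm{D}_r(u,v):=r(u)-r(v)-\langle\nabla r(v),u-v\rangle$. Algorithm 3: given $x^0,y^0\in\mathbb{R}^{nd}$, $z^0\in\mathrm{range}(\mathbf{W})$, parameters $\eta,\theta,\lambda,\alpha,\beta,\gamma,\nu>0$, $\tau,\sigma\in(0,1)$,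 set $x_f^0=x^0$, $y_f^0=y^0$, $z_f^0=z^0$, and for $k\ge0$: $x_g^k=\tau x^k+(1-\tau)x_f^k$, $y_g^k=\sigma y^k+(1-\sigma)y_f^k$, $z_g^k=\sigma z^k+(1-\sigma)z_f^k$; $(x^{k+1},y^{k+1})$ satisfies $x^{k+1} = x^k + \eta\alpha(x_g^k-x^{k+1}) - \eta\nabla r(x_g^k) + \eta y^{k+1}$ and $y^{k+1} = y^k + \theta\beta(y_g^k - y^{k+1}) - \theta\nabla_y h(y_g^k,z_g^k) + \theta\nu y^{k+1} - \theta x^{k+1}$; $z^{k+1} = z^k + \lambda\gamma(z_g^k - z^{k+1}) - \lambda\mathbf{W}\nabla_z h(y_g^k,z_g^k)$; $x_f^{k+1}=x_g^k+\frac{2\tau}{2-\tau}(x^{k+1}-x^k)$, $y_f^{k+1}=y_g^k+\sigma(y^{k+1}-y^k)$, $z_f^{k+1}=z_g^k+\sigma(z^{k+1}-z^k)$. *)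

theory Defs
  imports "HOL-Analysis.Analysis"
begin

text \<open>Points of R^{nd} are represented as n-tuples of d-vectors: real^'d^'n.\<close>

definition consensus :: "(real^'d^'n) set" where
  "consensus = {x. \<forall>i j. x $ i = x $ j}"

definition strongly_convex :: "real \<Rightarrow> ('a::real_inner \<Rightarrow> real) \<Rightarrow> bool" where
  "strongly_convex mu F \<longleftrightarrow> convex_on UNIV (\<lambda>x. F x - mu / 2 * norm x ^ 2)"

definition L_smooth :: "real \<Rightarrow> ('a::real_inner \<Rightarrow> 'a) \<Rightarrow> bool" where
  "L_smooth L gF \<longleftrightarrow> (\<forall>x y. norm (gF x - gF y) \<le> L * norm (x - y))"

definition rfun :: "real \<Rightarrow> ('a::real_inner \<Rightarrow> real) \<Rightarrow> 'a \<Rightarrow> real" where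
  "rfun mu F x = F x - mu / 4 * norm x ^ 2"

definition grad_r :: "real \<Rightarrow> ('a::real_inner \<Rightarrow> 'a) \<Rightarrow> 'a \<Rightarrow> 'a" where
  "grad_r mu gF x = gF x - (mu / 2) *\<^sub>R x"

definition Dr :: "real \<Rightarrow> ('a::real_inner \<Rightarrow> real) \<Rightarrow> ('a \<Rightarrow> 'a) \<Rightarrow> 'a \<Rightarrow> 'a \<Rightarrow> real" where
  "Dr mu F gF u v = rfun mu F u - rfun mu F v - inner (grad_r mu gF v) (u - v)"

text \<open>Partial gradients of h(y,z) = (1/mu)|y+z|^2 + (nu/2)|y|^2.\<close>
definition grad_y_h :: "real \<Rightarrow> real \<Rightarrow> 'a::real_inner \<Rightarrow> 'a \<Rightarrow> 'a" where
  "grad_y_h mu nu y z = (2 / mu) *\<^sub>R (y + z) + nu *\<^sub>R y"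

definition grad_z_h :: "real \<Rightarrow> 'a::real_inner \<Rightarrow> 'a \<Rightarrow> 'a" where
  "grad_z_h mu y z = (2 / mu) *\<^sub>R (y + z)"

end

theory Submission
  imports Defs
begin

text \<open>
  Write \<open>G = \<nabla>r(x\<^sub>g\<^sup>k) - \<nabla>r(x\<^sup>*)\<close>. The \<open>x\<close>-update says
  \<open>x\<^sup>k\<^sup>+\<^sup>1 - x\<^sup>k = \<eta>(y\<^sup>k\<^sup>+\<^sup>1 - y\<^sup>* - \<alpha>(x\<^sup>k\<^sup>+\<^sup>1 - x\<^sub>g\<^sup>k) - G)\<close>, so expanding
  \<open>\<parallel>x\<^sup>k\<^sup>+\<^sup>1 - x\<^sup>*\<parallel>\<^sup>2\<close> by the polarization identity leaves the term \<open>-2\<langle>G, x\<^sup>k\<^sup>+\<^sup>1 - x\<^sup>*\<rangle>\<close>.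
  The coupling \<open>x\<^sub>g\<^sup>k = \<tau>x\<^sup>k + (1-\<tau>)x\<^sub>f\<^sup>k\<close> and the extrapolation defining \<open>x\<^sub>f\<^sup>k\<^sup>+\<^sup>1\<close>
  rewrite this inner product, through the three-point identity of the Bregman divergence of
  \<open>r\<close>, exactly as the divergence terms of the claim plus divergences centred at \<open>x\<^sub>g\<^sup>k\<close>.
  Since \<open>r\<close> is \<open>\<mu>/2\<close>-strongly convex and \<open>L\<close>-smooth, the latter dominate the remaining
  error terms: co-coercivity absorbs \<open>\<parallel>G\<parallel>\<^sup>2\<close> in the bound on \<open>\<parallel>y\<^sup>k\<^sup>+\<^sup>1 - y\<^sup>*\<parallel>\<^sup>2\<close>, and
  \<open>\<eta> \<le> 1/(4\<tau>L)\<close> pays for the extrapolation step. Only \<open>y\<^sup>* = \<nabla>r(x\<^sup>*)\<close> is used about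
  \<open>x\<^sup>*\<close>.
\<close>

lemma power2_norm_add_scaleR:
  fixes v d :: "'a::real_inner"
  shows "norm (v + t *\<^sub>R d) ^ 2 = norm v ^ 2 + 2 * t * inner v d + t ^ 2 * norm d ^ 2"
  by (simp only: power2_norm_eq_inner inner_add_left inner_add_right inner_scaleR_left
      inner_scaleR_right) (simp add: inner_commute power2_eq_square algebra_simps)

lemma norm_add3_power2_le:
  fixes a b c :: "'a::real_normed_vector"
  shows "norm (a + b + c) ^ 2 \<le> 2 * norm a ^ 2 + 4 * norm b ^ 2 + 4 * norm c ^ 2"
proof -
  have two: "norm (p + q) ^ 2 \<le> 2 * norm p ^ 2 + 2 * norm q ^ 2" for p q :: 'a
  proof -
    have "norm (p + q) ^ 2 \<le> (norm p + norm q) ^ 2"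
      by (simp add: norm_triangle_ineq power_mono)
    also have "\<dots> \<le> 2 * norm p ^ 2 + 2 * norm q ^ 2"
      using sum_squares_bound[of "norm p" "norm q"] by (simp add: power2_eq_square algebra_simps)
    finally show ?thesis .
  qed
  have "norm (a + (b + c)) ^ 2 \<le> 2 * norm a ^ 2 + 2 * norm (b + c) ^ 2" by (rule two)
  also have "\<dots> \<le> 2 * norm a ^ 2 + 2 * (2 * norm b ^ 2 + 2 * norm c ^ 2)" using two[of b c] by simp
  finally show ?thesis by (simp add: add.assoc)
qed

lemma scaled_power2_norm_add3_le:
  fixes p q G :: "'a::real_inner"
  assumes eta: "0 < eta" and L: "0 < L" and alpha: "0 < alpha" "alpha \<le> 2 * L"
  shows "eta * min 1 (1 / (2 * eta * L)) / 4 * norm ((1 / eta) *\<^sub>R p + alpha *\<^sub>R q + G) ^ 2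
       \<le> 1 / (2 * eta) * norm p ^ 2 + alpha * norm q ^ 2 + 1 / (2 * L) * norm G ^ 2"
proof -
  define \<delta> where "\<delta> = min 1 (1 / (2 * eta * L))"
  have \<delta>: "0 < \<delta>" "\<delta> \<le> 1" using eta L unfolding \<delta>_def by auto
  have eta_\<delta>: "eta * \<delta> \<le> 1 / (2 * L)"
    using eta L unfolding \<delta>_def by (simp add: min_def field_simps)
  have "eta * \<delta> / 4 * norm ((1 / eta) *\<^sub>R p + alpha *\<^sub>R q + G) ^ 2
      \<le> eta * \<delta> / 4 * (2 * norm ((1 / eta) *\<^sub>R p) ^ 2 + 4 * norm (alpha *\<^sub>R q) ^ 2 + 4 * norm G ^ 2)"
    using eta \<delta> by (intro mult_left_mono norm_add3_power2_le) auto
  also have "\<dots> = \<delta> / (2 * eta) * norm p ^ 2 + (eta * \<delta> * alpha) * (alpha * norm q ^ 2)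
                 + eta * \<delta> * norm G ^ 2"
    using eta by (simp add: power_mult_distrib power2_eq_square field_simps)
  also have "\<dots> \<le> 1 / (2 * eta) * norm p ^ 2 + 1 * (alpha * norm q ^ 2) + 1 / (2 * L) * norm G ^ 2"
  proof -
    have "eta * \<delta> * alpha \<le> 1 / (2 * L) * alpha" using eta_\<delta> alpha by (intro mult_right_mono) auto
    also have "\<dots> \<le> 1" using alpha L by (simp add: field_simps)
    finally have "eta * \<delta> * alpha \<le> 1" .
    then show ?thesis
      using \<delta> eta eta_\<delta> alpha
      by (intro add_mono mult_right_mono divide_right_mono) auto
  qed
  finally show ?thesis unfolding \<delta>_def by simp
qed

lemma proximal_step_identity:
  fixes x0 x1 xg xs Y G :: "'a::real_inner"
  assumes eta: "eta > 0"
    and step: "x1 - x0 = eta *\<^sub>R (Y - alpha *\<^sub>R (x1 - xg) - G)"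
  shows "(1 / eta) * norm (x1 - xs) ^ 2
       = (1 / eta) * norm (x0 - xs) ^ 2 - (1 / eta) * norm (x1 - x0) ^ 2
         + alpha * norm (xg - xs) ^ 2 - alpha * norm (x1 - xg) ^ 2 - alpha * norm (x1 - xs) ^ 2
         - 2 * inner G (x1 - xs) + 2 * inner Y (x1 - xs)"
proof -
  have
    "2 * inner (x1 - x0) (x1 - xs) = norm (x1 - x0) ^ 2 + norm (x1 - xs) ^ 2 - norm (x0 - xs) ^ 2"
    using dot_norm_neg[of "x1 - x0" "x1 - xs"] by (simp add: norm_minus_commute)
  moreover have
    "2 * inner (x1 - xg) (x1 - xs) = norm (x1 - xg) ^ 2 + norm (x1 - xs) ^ 2 - norm (xg - xs) ^ 2"
    using dot_norm_neg[of "x1 - xg" "x1 - xs"] by (simp add: norm_minus_commute)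
  moreover have "inner (x1 - x0) (x1 - xs)
      = eta * (inner Y (x1 - xs) - alpha * inner (x1 - xg) (x1 - xs) - inner G (x1 - xs))"
    unfolding step by (simp add: inner_diff_left)
  ultimately show ?thesis using eta by (simp add: field_simps)
qed

lemma has_real_derivative_along_line:
  fixes F :: "'a::real_inner \<Rightarrow> real"
  assumes grad: "\<And>u. (F has_derivative (\<lambda>h. inner (gF u) h)) (at u)"
    and "D' = inner (gF (v + t *\<^sub>R d)) d"
  shows "((\<lambda>t. F (v + t *\<^sub>R d)) has_real_derivative D') (at t within S)"
proof -
  have "((\<lambda>t. v + t *\<^sub>R d) has_derivative (\<lambda>h. h *\<^sub>R d)) (at t within S)"
    by (auto intro!: derivative_eq_intros)
  from has_derivative_compose[OF this grad]
  show ?thesis using assms(2) by (simp add: has_field_derivative_def mult_commute_abs)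
qed

lemma strongly_convex_imp_gradient_ineq:
  fixes F :: "'a::real_inner \<Rightarrow> real"
  assumes grad: "\<And>u. (F has_derivative (\<lambda>h. inner (gF u) h)) (at u)"
    and sc: "strongly_convex mu F"
  shows "mu / 2 * norm (u - v) ^ 2 \<le> F u - F v - inner (gF v) (u - v)"
proof -
  define d where "d = u - v"
  define g where "g = (\<lambda>x. F x - mu / 2 * norm x ^ 2)"
  define \<phi> where "\<phi> = (\<lambda>t. F (v + t *\<^sub>R d) - mu / 2 * (norm v ^ 2 + 2 * t * inner v d + t^2 * norm d ^ 2))"
  have \<phi>_eq: "\<phi> t = g (v + t *\<^sub>R d)" for t
    unfolding \<phi>_def g_def power2_norm_add_scaleR ..
  have g_convex: "convex_on UNIV g" using sc unfolding strongly_convex_def g_def .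
  have "convex_on UNIV \<phi>"
  proof (rule convex_onI)
    fix t a b :: real assume t: "0 < t" "t < 1"
    have "v + ((1 - t) *\<^sub>R a + t *\<^sub>R b) *\<^sub>R d = (1 - t) *\<^sub>R (v + a *\<^sub>R d) + t *\<^sub>R (v + b *\<^sub>R d)"
      by (simp add: algebra_simps)
    then show "\<phi> ((1 - t) *\<^sub>R a + t *\<^sub>R b) \<le> (1 - t) * \<phi> a + t * \<phi> b"
      unfolding \<phi>_eq using convex_onD[OF g_convex, of t "v + a *\<^sub>R d" "v + b *\<^sub>R d"] t by simp
  qed simp
  moreover have "(\<phi> has_real_derivative (inner (gF v) d - mu * inner v d)) (at 0)"
  proof -
    have "(\<phi> has_real_derivative inner (gF (v + 0 *\<^sub>R d)) d
        - mu / 2 * (0 + 2 * inner v d + 2 * 0 * norm d ^ 2)) (at 0)"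
      unfolding \<phi>_def
      by (intro derivative_eq_intros has_real_derivative_along_line[OF grad]) (auto simp: power2_eq_square)
    then show ?thesis by simp
  qed
  ultimately have "\<phi> 1 - \<phi> 0 \<ge> (inner (gF v) d - mu * inner v d) * (1 - 0)"
    by (intro convex_on_imp_above_tangent) auto
  then show ?thesis unfolding \<phi>_def d_def
    by (simp add: power2_norm_add_scaleR algebra_simps power2_norm_eq_inner inner_diff_left
        inner_diff_right inner_commute)
qed

lemma L_smooth_imp_descent_ineq:
  fixes F :: "'a::real_inner \<Rightarrow> real"
  assumes grad: "\<And>u. (F has_derivative (\<lambda>h. inner (gF u) h)) (at u)"
    and sm: "L_smooth L gF"
  shows "F u - F v - inner (gF v) (u - v) \<le> L / 2 * norm (u - v) ^ 2"
proof -
  define d where "d = u - v"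
  define \<phi> where "\<phi> = (\<lambda>t. F (v + t *\<^sub>R d) - t * inner (gF v) d - L / 2 * t^2 * norm d ^ 2)"
  have \<phi>_deriv: "(\<phi> has_real_derivative (inner (gF (v + t *\<^sub>R d) - gF v) d - L * t * norm d ^ 2)) (at t)" for t
  proof -
    have "(\<phi> has_real_derivative inner (gF (v + t *\<^sub>R d)) d - 1 * inner (gF v) d
        - L / 2 * (2 * t) * norm d ^ 2) (at t)"
      unfolding \<phi>_def
      by (intro derivative_eq_intros has_real_derivative_along_line[OF grad]) (auto simp: power2_eq_square)
    then show ?thesis by (simp add: inner_diff_left)
  qed
  obtain t where t: "0 < t" "t < 1"
    and mvt: "\<phi> 1 - \<phi> 0 = inner (gF (v + t *\<^sub>R d) - gF v) d - L * t * norm d ^ 2"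
    using MVT2[of 0 1 \<phi>, OF _ \<phi>_deriv] by auto
  have "inner (gF (v + t *\<^sub>R d) - gF v) d \<le> norm (gF (v + t *\<^sub>R d) - gF v) * norm d"
    by (rule norm_cauchy_schwarz)
  also have "\<dots> \<le> (L * norm (t *\<^sub>R d)) * norm d"
    using sm[unfolded L_smooth_def, rule_format, of "v + t *\<^sub>R d" v] by (simp add: mult_right_mono)
  also have "\<dots> = L * t * norm d ^ 2" using t by (simp add: power2_eq_square)
  finally have "\<phi> 1 - \<phi> 0 \<le> 0" using mvt by simp
  then show ?thesis unfolding \<phi>_def d_def by simp
qed

lemma Dr_eq_linearization_gap:
  fixes u v :: "'a::real_inner"
  shows "Dr mu F gF u v = (F u - F v - inner (gF v) (u - v)) - mu / 4 * norm (u - v) ^ 2"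
  unfolding Dr_def rfun_def grad_r_def
  by (simp add: power2_norm_eq_inner inner_diff_left inner_diff_right inner_commute algebra_simps)

lemma Dr_three_point:
  "Dr mu F gF a c = Dr mu F gF b c + inner (grad_r mu gF b - grad_r mu gF c) (a - b) + Dr mu F gF a b"
  for a b c :: "'a::real_inner"
  unfolding Dr_def by (simp add: algebra_simps)

lemma Dr_coupling_identity:
  fixes x0 x1 xg xf xf1 xs :: "'a::real_inner" and tau mu :: real and F gF
  defines "D \<equiv> Dr mu F gF"
    and "G \<equiv> grad_r mu gF xg - grad_r mu gF xs"
  assumes tau: "0 < tau" "tau < 1"
    and xg: "xg = tau *\<^sub>R x0 + (1 - tau) *\<^sub>R xf"
    and xf1: "xf1 = xg + (2 * tau / (2 - tau)) *\<^sub>R (x1 - x0)"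
  shows "2 * inner G (x1 - xs)
       = D xg xs + 2 * D xs xg - (2 * (1 - tau) / tau) * D xf xs + (2 * (1 - tau) / tau) * D xf xg
         + ((2 - tau) / tau) * D xf1 xs - ((2 - tau) / tau) * D xf1 xg"
proof -
  have "((2 - tau) / 2) *\<^sub>R (xf1 - xg) = tau *\<^sub>R (x1 - x0)"
    using tau unfolding xf1 by simp
  then have "tau *\<^sub>R (x1 - xs) = tau *\<^sub>R (xg - xs) - (1 - tau) *\<^sub>R (xf - xg) + ((2 - tau) / 2) *\<^sub>R (xf1 - xg)"
    unfolding xg by (simp add: algebra_simps)
  then have "tau * inner G (x1 - xs)
      = tau * inner G (xg - xs) - (1 - tau) * inner G (xf - xg) + ((2 - tau) / 2) * inner G (xf1 - xg)"
    by (metis inner_add_right inner_diff_right inner_scaleR_right)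
  moreover have "inner G (xf - xg) = D xf xs - D xg xs - D xf xg"
    and "inner G (xf1 - xg) = D xf1 xs - D xg xs - D xf1 xg"
    unfolding G_def D_def using Dr_three_point[of mu F gF _ xs xg] by (simp_all add: algebra_simps)
  moreover have "inner G (xg - xs) = D xg xs + D xs xg"
    using Dr_three_point[of mu F gF xs xs xg] unfolding G_def D_def
    by (simp add: Dr_def inner_diff_right algebra_simps)
  ultimately have "tau * inner G (x1 - xs) = tau * (D xg xs + D xs xg)
      - (1 - tau) * (D xf xs - D xg xs - D xf xg) + ((2 - tau) / 2) * (D xf1 xs - D xg xs - D xf1 xg)"
    by simp
  then have "tau * (2 * inner G (x1 - xs))
      = tau * (D xg xs + 2 * D xs xg - (2 * (1 - tau) / tau) * D xf xs
               + (2 * (1 - tau) / tau) * D xf xg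
               + ((2 - tau) / tau) * D xf1 xs - ((2 - tau) / tau) * D xf1 xg)"
    using tau by (simp add: algebra_simps add_divide_distrib diff_divide_distrib)
  then show ?thesis using tau by simp
qed

locale smooth_strongly_convex =
  fixes mu L :: real and F :: "'a::real_inner \<Rightarrow> real" and gF :: "'a \<Rightarrow> 'a"
  assumes grad: "\<And>u. (F has_derivative (\<lambda>h. inner (gF u) h)) (at u)"
    and strongly_convex: "strongly_convex mu F"
    and smooth: "L_smooth L gF"
    and mu_pos: "0 < mu" and mu_le_L: "mu \<le> L"
begin

abbreviation D :: "'a \<Rightarrow> 'a \<Rightarrow> real" where "D \<equiv> Dr mu F gF"

lemma L_pos: "0 < L"
  using mu_pos mu_le_L by linarith

lemma Dr_ge: "mu / 4 * norm (u - v) ^ 2 \<le> D u v"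
  using strongly_convex_imp_gradient_ineq[OF grad strongly_convex, of u v]
  unfolding Dr_eq_linearization_gap by simp

lemma Dr_le: "D u v \<le> L / 2 * norm (u - v) ^ 2"
proof -
  have "0 \<le> mu / 4 * norm (u - v) ^ 2" using mu_pos by simp
  then show ?thesis
    using L_smooth_imp_descent_ineq[OF grad smooth, of u v]
    unfolding Dr_eq_linearization_gap by linarith
qed

lemma Dr_nonneg: "0 \<le> D u v"
proof -
  have "0 \<le> mu / 4 * norm (u - v) ^ 2" using mu_pos by simp
  then show ?thesis using Dr_ge by (rule order_trans)
qed

text \<open>Co-coercivity: the upper bound at the gradient step \<open>w = u - (1/L)(\<nabla>r u - \<nabla>r v)\<close>,
  combined with \<open>D w v \<ge> 0\<close>.\<close>

lemma Dr_ge_grad_r: "1 / (2 * L) * norm (grad_r mu gF u - grad_r mu gF v) ^ 2 \<le> D u v"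
proof -
  define G where "G = grad_r mu gF u - grad_r mu gF v"
  define w where "w = u - (1 / L) *\<^sub>R G"
  have "D w v = D u v + inner G (w - u) + D w u"
    unfolding G_def by (rule Dr_three_point)
  moreover have "inner G (w - u) = - (1 / L) * norm G ^ 2"
    unfolding w_def by (simp add: power2_norm_eq_inner)
  moreover have "D w u \<le> 1 / (2 * L) * norm G ^ 2"
    using Dr_le[of w u] L_pos unfolding w_def by (simp add: power2_eq_square field_simps)
  moreover have "1 / L * norm G ^ 2 = 2 * (1 / (2 * L) * norm G ^ 2)"
    using L_pos by (simp add: field_simps)
  ultimately show ?thesis using Dr_nonneg[of w v] unfolding G_def[symmetric] by linarith
qed

lemma Dr_extrapolation_le:
  assumes "0 < eta" "0 < tau" "tau < 1" "eta \<le> 1 / (4 * tau * L)"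
  shows "(2 - tau) / tau * D (v + (2 * tau / (2 - tau)) *\<^sub>R p) v \<le> 1 / (2 * eta) * norm p ^ 2"
proof -
  have "(2 - tau) / tau * D (v + (2 * tau / (2 - tau)) *\<^sub>R p) v
      \<le> (2 - tau) / tau * (L / 2 * ((2 * tau / (2 - tau)) ^ 2 * norm p ^ 2))"
    using Dr_le[of "v + (2 * tau / (2 - tau)) *\<^sub>R p" v] assms
    by (intro mult_left_mono) (simp_all only: add_diff_cancel_left' norm_scaleR power_mult_distrib
        power2_abs, simp_all)
  also have "\<dots> = 2 * tau * L / (2 - tau) * norm p ^ 2"
  proof -
    have "c / tau * (L / 2 * ((2 * tau / c) ^ 2 * P)) = 2 * tau * L / c * P" if "c \<noteq> 0" for c P
      using that assms by (simp add: power2_eq_square field_simps)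
    then show ?thesis using assms by simp
  qed
  also have "\<dots> \<le> 2 * tau * L / 1 * norm p ^ 2"
    using assms L_pos by (intro mult_right_mono divide_left_mono) auto
  also have "\<dots> \<le> 1 / (2 * eta) * norm p ^ 2"
    using assms L_pos by (intro mult_right_mono) (simp_all add: field_simps)
  finally show ?thesis .
qed

lemma x_update_ineq:
  fixes x0 x1 xg xf xf1 y1 xs :: 'a and eta alpha tau :: real
  defines "ys \<equiv> grad_r mu gF xs"
  assumes eta: "0 < eta" and alpha: "0 < alpha" "alpha \<le> mu / 2"
    and tau: "0 < tau" "tau < 1" and eta_le: "eta \<le> 1 / (4 * tau * L)"
    and xg: "xg = tau *\<^sub>R x0 + (1 - tau) *\<^sub>R xf"
    and x1: "x1 = x0 + (eta * alpha) *\<^sub>R (xg - x1) - eta *\<^sub>R grad_r mu gF xg + eta *\<^sub>R y1"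
    and xf1: "xf1 = xg + (2 * tau / (2 - tau)) *\<^sub>R (x1 - x0)"
  shows "(1 / eta) * norm (x1 - xs) ^ 2
       \<le> (1 / eta) * norm (x0 - xs) ^ 2 - (3 * alpha / 4) * norm (x1 - xs) ^ 2
         + (2 * (1 - tau) / tau) * D xf xs - ((2 - tau) / tau) * D xf1 xs
         - (eta * min 1 (1 / (2 * eta * L)) / 4) * norm (y1 - ys) ^ 2
         + 2 * inner (y1 - ys) (x1 - xs)"
proof -
  define G where "G = grad_r mu gF xg - ys"
  have step: "x1 - x0 = eta *\<^sub>R ((y1 - ys) - alpha *\<^sub>R (x1 - xg) - G)"
    using x1 unfolding G_def by (simp add: algebra_simps)
  then have "(1 / eta) *\<^sub>R (x1 - x0) = (y1 - ys) - alpha *\<^sub>R (x1 - xg) - G"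
    using eta by simp
  then have y1: "y1 - ys = (1 / eta) *\<^sub>R (x1 - x0) + alpha *\<^sub>R (x1 - xg) + G"
    by (simp add: algebra_simps)
  have dual: "eta * min 1 (1 / (2 * eta * L)) / 4 * norm (y1 - ys) ^ 2
      \<le> 1 / (2 * eta) * norm (x1 - x0) ^ 2 + alpha * norm (x1 - xg) ^ 2 + 1 / (2 * L) * norm G ^ 2"
    unfolding y1
    by (rule scaled_power2_norm_add3_le[OF eta L_pos alpha(1)]) (use alpha mu_le_L in linarith)
  have extrapolation: "(2 - tau) / tau * D xf1 xg \<le> 1 / (2 * eta) * norm (x1 - x0) ^ 2"
    unfolding xf1 using Dr_extrapolation_le[OF eta tau eta_le] .
  have "alpha * norm (xg - xs) ^ 2 \<le> mu / 2 * norm (xg - xs) ^ 2"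
    using alpha by (intro mult_right_mono) auto
  moreover have "mu / 4 * norm (xg - xs) ^ 2 \<le> D xs xg"
    using Dr_ge[of xs xg] by (simp add: norm_minus_commute)
  moreover have "1 / (2 * L) * norm G ^ 2 \<le> D xs xg"
    using Dr_ge_grad_r[of xs xg] unfolding G_def ys_def by (simp add: norm_minus_commute)
  moreover have "2 * inner G (x1 - xs)
      = D xg xs + 2 * D xs xg - (2 * (1 - tau) / tau) * D xf xs + (2 * (1 - tau) / tau) * D xf xg
        + ((2 - tau) / tau) * D xf1 xs - ((2 - tau) / tau) * D xf1 xg"
    unfolding G_def ys_def by (rule Dr_coupling_identity[OF tau xg xf1])
  moreover have "0 \<le> (2 * (1 - tau) / tau) * D xf xg" "0 \<le> alpha * norm (x1 - xs) ^ 2"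
    using tau alpha Dr_nonneg by simp_all
  ultimately show ?thesis
    using proximal_step_identity[OF eta step, of xs] dual extrapolation Dr_ge[of xg xs]
    by linarith
qed

end

theorem mainTheorem10:
  fixes F :: "real^'d^'n \<Rightarrow> real" and gF :: "real^'d^'n \<Rightarrow> real^'d^'n"
    and W :: "real^'d^'n \<Rightarrow> real^'d^'n"
    and mu L eta theta lambda alpha beta gamma nu tau sigma :: real
    and xs :: "real^'d^'n"
    and x y z xf yf zf xg yg zg :: "nat \<Rightarrow> real^'d^'n"
  assumes grad: "\<And>u. (F has_derivative (\<lambda>h. inner (gF u) h)) (at u)"
    and sconv: "strongly_convex mu F"
    and smooth: "L_smooth L gF"
    and muL: "0 < mu" "mu \<le> L"
    and Wlin: "linear W"
    and Wsym: "\<And>u v. inner (W u) v = inner u (W v)"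
    and Wpsd: "\<And>u. 0 \<le> inner (W u) u"
    and Wker: "{u. W u = 0} = consensus"
    and xs_cons: "xs \<in> consensus"
    and xs_min: "\<And>u. u \<in> consensus \<Longrightarrow> F xs \<le> F u"
    and params: "0 < eta" "0 < theta" "0 < lambda" "0 < alpha" "0 < beta" "0 < gamma" "0 < nu"
    and tau: "0 < tau" "tau < 1"
    and sigma: "0 < sigma" "sigma < 1"
    and z0: "z 0 \<in> range W"
    and init: "xf 0 = x 0" "yf 0 = y 0" "zf 0 = z 0"
    and xg_def: "\<And>k. xg k = tau *\<^sub>R x k + (1 - tau) *\<^sub>R xf k"
    and yg_def: "\<And>k. yg k = sigma *\<^sub>R y k + (1 - sigma) *\<^sub>R yf k"
    and zg_def: "\<And>k. zg k = sigma *\<^sub>R z k + (1 - sigma) *\<^sub>R zf k"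
    and x_upd: "\<And>k. x (Suc k) = x k + (eta * alpha) *\<^sub>R (xg k - x (Suc k))
                   - eta *\<^sub>R grad_r mu gF (xg k) + eta *\<^sub>R y (Suc k)"
    and y_upd: "\<And>k. y (Suc k) = y k + (theta * beta) *\<^sub>R (yg k - y (Suc k))
                   - theta *\<^sub>R grad_y_h mu nu (yg k) (zg k) + (theta * nu) *\<^sub>R y (Suc k)
                   - theta *\<^sub>R x (Suc k)"
    and z_upd: "\<And>k. z (Suc k) = z k + (lambda * gamma) *\<^sub>R (zg k - z (Suc k))
                   - lambda *\<^sub>R W (grad_z_h mu (yg k) (zg k))"
    and xf_upd: "\<And>k. xf (Suc k) = xg k + (2 * tau / (2 - tau)) *\<^sub>R (x (Suc k) - x k)"
    and yf_upd: "\<And>k. yf (Suc k) = yg k + sigma *\<^sub>R (y (Suc k) - y k)"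
    and zf_upd: "\<And>k. zf (Suc k) = zg k + sigma *\<^sub>R (z (Suc k) - z k)"
    and alpha_le: "alpha \<le> mu / 2"
    and eta_le: "eta \<le> 1 / (4 * tau * L)"
  shows "let ys = gF xs - (mu / 2) *\<^sub>R xs;
             \<delta> = min 1 (1 / (2 * eta * L))
         in \<forall>k. (1 / eta) * norm (x (Suc k) - xs) ^ 2
              \<le> (1 / eta) * norm (x k - xs) ^ 2
                 - (3 * alpha / 4) * norm (x (Suc k) - xs) ^ 2
                 + (2 * (1 - tau) / tau) * Dr mu F gF (xf k) xs
                 - ((2 - tau) / tau) * Dr mu F gF (xf (Suc k)) xs
                 - (eta * \<delta> / 4) * norm (y (Suc k) - ys) ^ 2
                 + 2 * inner (y (Suc k) - ys) (x (Suc k) - xs)"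
proof -
  interpret smooth_strongly_convex mu L F gF
    using grad sconv smooth muL by unfold_locales
  show ?thesis
    unfolding Let_def
    using x_update_ineq[OF params(1) params(4) alpha_le tau eta_le xg_def x_upd xf_upd]
    by (simp add: grad_r_def)
qed

end
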